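(* Let $\lambda,\mu>0$ and let $\Theta$ have the inverse Gaussian density $f_\Theta(x)=\sqrt{\lambda/(2\pi)}\,x^{-3/2}\exp\!\big(-\lambda(x-\mu)^2/(2\mu^2x)\big)$, $x>0$. Let $(X_1,\dots,X_n)$ be such that, given $\Theta=\theta$, $X_1,\dots,X_n$ are independent exponential with rate $\theta$; equivalently $$\Pr(X_1>x_1,\dots,X_n>x_n)=\exp\Big\{-\frac{\lambda}{\mu}\Big(\sqrt{1+\tfrac{2\mu^2}{\lambda}\textstyle\sum_{j=1}^n x_j}-1\Big)\Big\},\quad x_j\ge0.$$ Set $c=2\mu^2/\lambda$, $a(x)=\sqrt{1+cx}-1$, $b(x)=\frac{\lambda}{\mu}a(x)$, and $a_j=\frac{(-1)^{j-1}(2j-2)!}{2^{2j-1}(j-1)!}$ for $j\ge1$. Then the pdf of $S_n=X_1+\dots+X_n$ is $$f_{S_n}(x)=\frac{x^{n-1}}{\Gamma(n)}\sum_{k=1}^n(-1)^{n+k}\Big(\frac{\lambda}{\mu}\Big)^k e^{-b(x)}u_{n,k}(x),\qquad x>0,$$ and $f_{S_n}(x)=0$ for $x<0$, where $$u_{n,k}(x)=B_{n,k}\big(a_1c^1(1+cx)^{1/2-1},\,a_2c^2(1+cx)^{1/2-2},\dots,a_{n-k+1}c^{n-k+1}(1+cx)^{1/2-(n-k+1)}\big).$$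
   Context: The partial Bell polynomials are $B_{n,k}(x_1,\dots,x_{n-k+1})=\sum\frac{n!}{j_1!\cdots j_{n-k+1}!}\big(\frac{x_1}{1!}\big)^{j_1}\cdots\big(\frac{x_{n-k+1}}{(n-k+1)!}\big)^{j_{n-k+1}}$, the sum over all non-negative integers $j_1,\dots,j_{n-k+1}$ with $\sum_i j_i=k$ and $\sum_i i\,j_i=n$. *)

theory Defs
  imports "HOL-Probability.Probability"
begin

text \<open>Partial Bell polynomial B_{n,k}(x_1,...,x_{n-k+1}); the arguments are given as a
  function x indexed from 1.\<close>
definition bell_partial :: "nat \<Rightarrow> nat \<Rightarrow> (nat \<Rightarrow> real) \<Rightarrow> real" where
  "bell_partial n k x =
     (\<Sum>j \<in> {j \<in> {1..n-k+1} \<rightarrow>\<^sub>E {0..n}.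
              (\<Sum>i\<in>{1..n-k+1}. j i) = k \<and> (\<Sum>i\<in>{1..n-k+1}. i * j i) = n}.
        fact n / (\<Prod>i\<in>{1..n-k+1}. fact (j i)) *
        (\<Prod>i\<in>{1..n-k+1}. (x i / fact i) ^ (j i)))"

definition ig_coeff :: "nat \<Rightarrow> real" where
  "ig_coeff j = (-1) ^ (j - 1) * fact (2 * j - 2) / (2 ^ (2 * j - 1) * fact (j - 1))"

definition ig_u :: "real \<Rightarrow> real \<Rightarrow> nat \<Rightarrow> nat \<Rightarrow> real \<Rightarrow> real" where
  "ig_u lam mu n k x =
     (let c = 2 * mu\<^sup>2 / lam in
      bell_partial n k (\<lambda>i. ig_coeff i * c ^ i * (1 + c * x) powr (1/2 - real i)))"

definition ig_sum_pdf :: "real \<Rightarrow> real \<Rightarrow> nat \<Rightarrow> real \<Rightarrow> real" where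
  "ig_sum_pdf lam mu n x =
     (if x > 0 then
        (let c = 2 * mu\<^sup>2 / lam; b = lam / mu * (sqrt (1 + c * x) - 1) in
         x ^ (n - 1) / Gamma (real n) *
         (\<Sum>k=1..n. (-1) ^ (n + k) * (lam / mu) ^ k * exp (- b) * ig_u lam mu n k x))
      else 0)"

end

theory Submission
  imports Defs "HOL-Computational_Algebra.Formal_Power_Series" "HOL-Real_Asymp.Real_Asymp"
begin

text \<open>Given \<open>\<Theta>\<close> the \<open>X\<^sub>j\<close> are independent exponentials, so the joint survival function is
  Schur-constant: it equals \<open>S (x\<^sub>1 + ... + x\<^sub>n)\<close>, where \<open>S s = exp (- b s)\<close> is the Laplace
  transform of the inverse Gaussian law and hence completely monotone. Taylor's formula with
  integral remainder shows that \<open>(-1)^n S^(n) (z\<^sub>1 + ... + z\<^sub>n)\<close> integrates to \<open>S\<close> over every upper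
  orthant, so it is the joint density on the positive orthant; since the slice of the orthant where
  the coordinates sum to \<open>s\<close> has volume \<open>s^(n-1)/(n-1)!\<close>, the sum has density
  \<open>(-1)^n S^(n) s \<cdot> s^(n-1)/(n-1)!\<close>. Finally, Faa di Bruno's formula for the derivatives of
  \<open>exp (- b s)\<close>, expressed through \<open>B(n,k) y = n!/k! [t^n] (\<Sum>i. y\<^sub>i t^i/i!)^k\<close>, yields the partial
  Bell polynomials evaluated at the derivatives of \<open>sqrt (1 + c s)\<close>.\<close>

unbundle no vec_syntax
unbundle fps_syntax

section \<open>Powers of formal power series and partial Bell polynomials\<close>

lemma fps_power_nth_eq_0:
  fixes p :: "'a::comm_ring_1 fps"
  assumes "p $ 0 = 0" "n < k"
  shows "(p ^ k) $ n = 0"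
proof (cases "p = 0")
  case False
  with assms(1) have "1 \<le> subdegree p"
    using subdegree_eq_0_iff[of p] by (simp add: Suc_le_eq gr0I)
  then have "n < k * subdegree p"
    using assms(2) by (metis less_le_trans mult.right_neutral mult_le_mono2)
  then show ?thesis by (rule fps_pow_nth_below_subdegree)
qed (use assms in \<open>simp add: power_0_left\<close>)

lemma fps_power_nth_cong:
  fixes p q :: "'a::comm_ring_1 fps"
  assumes "p $ 0 = 0" "q $ 0 = 0"
    and "\<And>i. 1 \<le> i \<Longrightarrow> i + k \<le> n + 1 \<Longrightarrow> p $ i = q $ i"
  shows "(p ^ k) $ n = (q ^ k) $ n"
  using assms(3)
proof (induction k arbitrary: n)
  case (Suc k)
  have "p $ i * (p ^ k) $ (n - i) = q $ i * (q ^ k) $ (n - i)" if "i \<le> n" for i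
  proof (cases "i = 0 \<or> n - i < k")
    case True
    then show ?thesis
      using assms(1,2) fps_power_nth_eq_0[OF assms(1)] fps_power_nth_eq_0[OF assms(2)] by auto
  next
    case False
    then have "p $ i = q $ i" and "(p ^ k) $ (n - i) = (q ^ k) $ (n - i)"
      using that Suc.prems by (auto intro!: Suc.IH)
    then show ?thesis by simp
  qed
  then show ?case by (simp add: fps_mult_nth)
qed simp

lemma fps_power_nth_sign:
  fixes p :: "'a::linordered_idom fps"
  assumes "p $ 0 = 0" "\<And>i. (-1) ^ (i + 1) * p $ i \<ge> 0"
  shows "(-1) ^ (n + k) * (p ^ k) $ n \<ge> 0"
proof (induction k arbitrary: n)
  case (Suc k)
  have "(-1) ^ (n + Suc k) * (p ^ Suc k) $ n =
        (\<Sum>i=0..n. ((-1) ^ (i + 1) * p $ i) * ((-1) ^ (n - i + k) * (p ^ k) $ (n - i)))"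
    unfolding power_Suc fps_mult_nth sum_distrib_left
  proof (rule sum.cong[OF refl])
    fix i assume "i \<in> {0..n}"
    then have "(-1::'a) ^ (n + Suc k) = (-1) ^ (i + 1) * (-1) ^ (n - i + k)"
      by (simp flip: power_add)
    then show "(-1) ^ (n + Suc k) * (p $ i * (p ^ k) $ (n - i)) =
        (-1) ^ (i + 1) * p $ i * ((-1) ^ (n - i + k) * (p ^ k) $ (n - i))"
      by (simp add: algebra_simps)
  qed
  also have "\<dots> \<ge> 0"
    by (intro sum_nonneg mult_nonneg_nonneg assms Suc.IH)
  finally show ?case .
qed simp

lemma has_real_derivative_fps_power_nth:
  fixes p :: "real \<Rightarrow> real fps"
  assumes "\<And>i. ((\<lambda>x. p x $ i) has_real_derivative q $ i) (at x)"
  shows "((\<lambda>x. (p x ^ k) $ n) has_real_derivative (of_nat k * p x ^ (k - 1) * q) $ n) (at x)"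
proof (induction k arbitrary: n)
  case (Suc k)
  have "((\<lambda>x. \<Sum>i=0..n. p x $ i * (p x ^ k) $ (n - i)) has_real_derivative
          (\<Sum>i=0..n. q $ i * (p x ^ k) $ (n - i) + (of_nat k * p x ^ (k - 1) * q) $ (n - i) * p x $ i)) (at x)"
    by (intro DERIV_sum DERIV_mult assms Suc.IH)
  also have "(\<Sum>i=0..n. q $ i * (p x ^ k) $ (n - i) + (of_nat k * p x ^ (k - 1) * q) $ (n - i) * p x $ i) =
      (q * p x ^ k + p x * (of_nat k * p x ^ (k - 1) * q)) $ n"
    by (simp only: fps_add_nth fps_mult_nth[of q] fps_mult_nth[of "p x"] sum.distrib[symmetric] mult.commute)
  also have "q * p x ^ k + p x * (of_nat k * p x ^ (k - 1) * q) = of_nat (Suc k) * p x ^ (Suc k - 1) * q"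
    by (cases k) (simp_all add: algebra_simps)
  finally show ?case by (simp add: fps_mult_nth)
qed simp

lemma fps_power_deriv_nth:
  fixes p :: "'a::comm_ring_1 fps"
  shows "(of_nat k * p ^ (k - 1) * (fps_deriv p - fps_const y)) $ m =
         of_nat (Suc m) * (p ^ k) $ Suc m - of_nat k * y * (p ^ (k - 1)) $ m"
proof -
  have "of_nat k * p ^ (k - 1) * (fps_deriv p - fps_const y) =
        fps_deriv (p ^ k) - fps_const (of_nat k * y) * p ^ (k - 1)"
    by (simp add: fps_deriv_power' algebra_simps fps_of_nat[symmetric]
        fps_const_mult[symmetric] del: fps_const_mult)
  then show ?thesis by simp
qed

definition bell_indices :: "nat \<Rightarrow> nat \<Rightarrow> nat \<Rightarrow> (nat \<Rightarrow> nat) set" where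
  "bell_indices m n k = {j \<in> {1..m} \<rightarrow>\<^sub>E {0..n}.
     (\<Sum>i\<in>{1..m}. j i) = k \<and> (\<Sum>i\<in>{1..m}. i * j i) = n}"

definition bell_term :: "nat \<Rightarrow> nat \<Rightarrow> (nat \<Rightarrow> 'a::field_char_0) \<Rightarrow> (nat \<Rightarrow> nat) \<Rightarrow> 'a" where
  "bell_term m k x j = fact k / (\<Prod>i\<in>{1..m}. fact (j i)) * (\<Prod>i\<in>{1..m}. x i ^ j i)"

lemma finite_bell_indices: "finite (bell_indices m n k)"
  unfolding bell_indices_def by (rule finite_subset[OF _ finite_PiE[of "{1..m}" "\<lambda>_. {0..n}"]]) auto

lemma bell_indices_nth_le:
  fixes j :: "nat \<Rightarrow> nat"
  assumes "(\<Sum>i\<in>{1..m}. i * j i) = n" "l \<in> {1..m}"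
  shows "j l \<le> l * j l" "l * j l \<le> n"
  using member_le_sum[of l "{1..m}" "\<lambda>i. i * j i"] assms by auto

lemma mem_bell_indices:
  "j \<in> bell_indices m n k \<longleftrightarrow>
     j \<in> extensional {1..m} \<and> (\<Sum>i\<in>{1..m}. j i) = k \<and> (\<Sum>i\<in>{1..m}. i * j i) = n"
proof -
  have "j l \<le> n" if "(\<Sum>i\<in>{1..m}. i * j i) = n" "l \<in> {1..m}" for l
    using bell_indices_nth_le[OF that] by linarith
  then show ?thesis by (auto simp: bell_indices_def PiE_iff)
qed

lemma bell_indices_nth_eq_0:
  assumes "j \<in> bell_indices m n k" "l \<in> {1..m}" "n < l"
  shows "j l = 0"
proof -
  have "l * j l \<le> n"
    using bell_indices_nth_le(2)[of j m n l] assms(1,2) by (simp add: mem_bell_indices)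
  with assms(3) show ?thesis by (cases "j l") auto
qed

lemma bell_indices_0: "bell_indices m n 0 = (if n = 0 then {restrict (\<lambda>_. 0) {1..m}} else {})"
  by (auto simp: mem_bell_indices extensional_def)

lemma sum_fun_upd_add:
  fixes c j :: "'a \<Rightarrow> 'b::comm_semiring_1"
  assumes "finite A" "i \<in> A"
  shows "(\<Sum>l\<in>A. c l * (j(i := v)) l) + c i * j i = c i * v + (\<Sum>l\<in>A. c l * j l)"
  by (simp add: sum.remove[OF assms] algebra_simps)

lemma bij_betw_bell_indices_fun_upd_Suc:
  assumes i: "i \<in> {1..m}" "i \<le> n"
  shows "bij_betw (\<lambda>j. j(i := Suc (j i)))
           (bell_indices m (n - i) k) {j \<in> bell_indices m n (Suc k). j i \<noteq> 0}"
proof (rule bij_betw_byWitness[where f' = "\<lambda>j. j(i := j i - 1)"])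
  have upd: "(\<Sum>l\<in>{1..m}. (j(i := v)) l) + j i = v + (\<Sum>l\<in>{1..m}. j l)"
    "(\<Sum>l\<in>{1..m}. l * (j(i := v)) l) + i * j i = i * v + (\<Sum>l\<in>{1..m}. l * j l)" for j v
    using sum_fun_upd_add[of "{1..m}" i "\<lambda>_. 1" j v] sum_fun_upd_add[of "{1..m}" i "\<lambda>l. l" j v] i
    by simp_all
  show "(\<lambda>j. j(i := Suc (j i))) ` bell_indices m (n - i) k \<subseteq> {j \<in> bell_indices m n (Suc k). j i \<noteq> 0}"
  proof (rule image_subsetI)
    fix j assume "j \<in> bell_indices m (n - i) k"
    then show "j(i := Suc (j i)) \<in> {j \<in> bell_indices m n (Suc k). j i \<noteq> 0}"
      using upd[of j "Suc (j i)"] i by (auto simp: mem_bell_indices extensional_def)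
  qed
  show "(\<lambda>j. j(i := j i - 1)) ` {j \<in> bell_indices m n (Suc k). j i \<noteq> 0} \<subseteq> bell_indices m (n - i) k"
  proof (rule image_subsetI)
    fix j assume "j \<in> {j \<in> bell_indices m n (Suc k). j i \<noteq> 0}"
    then show "j(i := j i - 1) \<in> bell_indices m (n - i) k"
      using upd[of j "j i - 1"] i by (auto simp: mem_bell_indices extensional_def algebra_simps)
  qed
qed auto

lemma bell_term_fun_upd_Suc:
  assumes "i \<in> {1..m}"
  shows "of_nat (Suc (j i)) * bell_term m k x (j(i := Suc (j i))) = x i * bell_term m k x j"
proof -
  have fin: "finite {1..m}" by simp
  have "(\<Prod>l\<in>{1..m}. fact ((j(i := Suc (j i))) l) :: 'a) = of_nat (Suc (j i)) * (\<Prod>l\<in>{1..m}. fact (j l))"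
    and "(\<Prod>l\<in>{1..m}. x l ^ (j(i := Suc (j i))) l) = x i * (\<Prod>l\<in>{1..m}. x l ^ j l)"
    unfolding prod.remove[OF fin assms] by (simp_all add: mult_ac del: of_nat_Suc)
  moreover have "(\<Prod>l\<in>{1..m}. fact (j l) :: 'a) \<noteq> 0" by simp
  ultimately show ?thesis by (simp add: bell_term_def del: of_nat_Suc)
qed

lemma bell_term_Suc:
  assumes "(\<Sum>i\<in>{1..m}. j i) = Suc k"
  shows "bell_term m (Suc k) x j = (\<Sum>i\<in>{1..m}. of_nat (j i) * bell_term m k x j)"
proof -
  have "(\<Sum>i\<in>{1..m}. of_nat (j i) * bell_term m k x j) = of_nat (Suc k) * bell_term m k x j"
    by (simp only: sum_distrib_right[symmetric] of_nat_sum[symmetric] assms)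
  then show ?thesis by (simp add: bell_term_def del: of_nat_Suc)
qed

lemma sum_bell_indices_Suc:
  assumes "i \<in> {1..m}"
  shows "(\<Sum>j\<in>bell_indices m n (Suc k). of_nat (j i) * bell_term m k x j) =
         (if i \<le> n then x i * (\<Sum>j\<in>bell_indices m (n - i) k. bell_term m k x j) else 0)"
proof (cases "i \<le> n")
  case True
  have "(\<Sum>j\<in>bell_indices m n (Suc k). of_nat (j i) * bell_term m k x j) =
        (\<Sum>j\<in>{j \<in> bell_indices m n (Suc k). j i \<noteq> 0}. of_nat (j i) * bell_term m k x j)"
    by (rule sum.mono_neutral_right) (auto simp: finite_bell_indices)
  also have "\<dots> = (\<Sum>j\<in>bell_indices m (n - i) k.
      (\<lambda>j. of_nat (j i) * bell_term m k x j) (j(i := Suc (j i))))"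
    by (rule sum.reindex_bij_betw[OF bij_betw_bell_indices_fun_upd_Suc[OF assms True], symmetric])
  also have "\<dots> = x i * (\<Sum>j\<in>bell_indices m (n - i) k. bell_term m k x j)"
    by (simp only: fun_upd_same bell_term_fun_upd_Suc[OF assms] sum_distrib_left)
  finally show ?thesis using True by simp
qed (use assms bell_indices_nth_eq_0 in \<open>auto intro: sum.neutral\<close>)

lemma fps_power_nth_eq_sum_bell_term:
  fixes p :: "'a::field_char_0 fps"
  assumes p0: "p $ 0 = 0" and pm: "\<And>i. m < i \<Longrightarrow> p $ i = 0"
  shows "(p ^ k) $ n = (\<Sum>j\<in>bell_indices m n k. bell_term m k (($) p) j)"
proof (induction k arbitrary: n)
  case 0
  show ?case by (simp add: bell_indices_0 bell_term_def)
next
  case (Suc k)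
  let ?B = "\<lambda>n k. \<Sum>j\<in>bell_indices m n k. bell_term m k (($) p) j"
  have support: "i \<in> {1..m}" if "p $ i \<noteq> 0" for i
    using that p0 pm by (metis One_nat_def Suc_leI atLeastAtMost_iff gr0I not_le)
  have "(p ^ Suc k) $ n = (\<Sum>i\<in>{0..n}. p $ i * ?B (n - i) k)"
    by (simp add: fps_mult_nth Suc.IH)
  also have "\<dots> = (\<Sum>i\<in>{i \<in> {1..m}. i \<le> n}. p $ i * ?B (n - i) k)"
    by (rule sum.mono_neutral_right) (auto dest: support)
  also have "\<dots> = (\<Sum>i\<in>{1..m}. if i \<le> n then p $ i * ?B (n - i) k else 0)"
    by (rule sum.inter_filter) simp
  also have "\<dots> = (\<Sum>i\<in>{1..m}. \<Sum>j\<in>bell_indices m n (Suc k). of_nat (j i) * bell_term m k (($) p) j)"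
    by (simp add: sum_bell_indices_Suc)
  also have "\<dots> = ?B n (Suc k)"
    by (subst sum.swap) (auto intro!: sum.cong simp: bell_term_Suc mem_bell_indices)
  finally show ?case .
qed

definition egf_fps :: "(nat \<Rightarrow> 'a::field_char_0) \<Rightarrow> 'a fps" where
  "egf_fps y = Abs_fps (\<lambda>i. if i = 0 then 0 else y i / fact i)"

lemma egf_fps_nth: "egf_fps y $ i = (if i = 0 then 0 else y i / fact i)"
  by (simp add: egf_fps_def)

lemma bell_partial_eq_fps_power_nth:
  "bell_partial n k y = fact n / fact k * (egf_fps y ^ k) $ n"
proof (cases "k \<le> n")
  case True
  define m where "m = n - k + 1"
  define p where "p = Abs_fps (\<lambda>i. if i \<le> m then egf_fps y $ i else 0)"
  have "(egf_fps y ^ k) $ n = (p ^ k) $ n"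
    by (rule fps_power_nth_cong) (use True in \<open>auto simp: egf_fps_nth p_def m_def\<close>)
  also have "\<dots> = (\<Sum>j\<in>bell_indices m n k. bell_term m k (($) p) j)"
    by (rule fps_power_nth_eq_sum_bell_term) (auto simp: p_def egf_fps_nth)
  finally have "fact n / fact k * (egf_fps y ^ k) $ n =
      (\<Sum>j\<in>bell_indices m n k. fact n / fact k * bell_term m k (($) p) j)"
    by (simp add: sum_distrib_left)
  also have "\<dots> = bell_partial n k y"
    unfolding bell_partial_def bell_indices_def m_def[symmetric]
  proof (rule sum.cong[OF refl])
    fix j :: "nat \<Rightarrow> nat"
    have "(\<Prod>i\<in>{1..m}. (p $ i) ^ j i) = (\<Prod>i\<in>{1..m}. (y i / fact i) ^ j i)"
      by (rule prod.cong) (auto simp: p_def egf_fps_nth)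
    then show "fact n / fact k * bell_term m k (($) p) j =
        fact n / (\<Prod>i\<in>{1..m}. fact (j i)) * (\<Prod>i\<in>{1..m}. (y i / fact i) ^ j i)"
      by (simp add: bell_term_def)
  qed
  finally show ?thesis ..
next
  case False
  then have empty: "{j \<in> {1..n - k + 1} \<rightarrow>\<^sub>E {0..n}. (\<Sum>i\<in>{1..n - k + 1}. j i) = k \<and>
      (\<Sum>i\<in>{1..n - k + 1}. i * j i) = n} = {}" by auto
  then show ?thesis
    unfolding bell_partial_def empty
    using False fps_power_nth_eq_0[of "egf_fps y" n k] by (simp add: egf_fps_nth)
qed

section \<open>Derivatives of the inverse Gaussian Laplace transform\<close>

lemma ig_coeff_Suc:
  assumes "1 \<le> i"
  shows "ig_coeff (Suc i) = ig_coeff i * (1/2 - real i)"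
proof -
  obtain m where i: "i = Suc m" using assms by (cases i) auto
  define A F P G where "A = (-1::real) ^ m" and "F = (fact (2 * m) :: real)"
    and "P = (2::real) ^ (2 * m + 1)" and "G = (fact m :: real)"
  have pos: "F > 0" "P > 0" "G > 0" by (simp_all add: F_def P_def G_def)
  have "2 * Suc (Suc m) - 2 = Suc (Suc (2 * m))" "2 * Suc (Suc m) - 1 = Suc (Suc (2 * m + 1))"
    by simp_all
  then have "ig_coeff (Suc (Suc m)) =
      (- A * (2 * m + 1) * F) * (2 * (m + 1)) / ((2 * P * G) * (2 * (m + 1)))"
    by (simp add: ig_coeff_def A_def F_def P_def G_def algebra_simps)
  also have "\<dots> = - A * (2 * m + 1) * F / (2 * P * G)"
    by (rule mult_divide_mult_cancel_right) simp
  also have "\<dots> = A * F / (P * G) * (1/2 - real (Suc m))"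
    using pos by (simp add: field_simps)
  also have "A * F / (P * G) = ig_coeff (Suc m)"
    by (simp add: ig_coeff_def A_def F_def P_def G_def)
  finally show ?thesis unfolding i .
qed

lemma ig_coeff_sign:
  assumes "1 \<le> i"
  shows "(-1) ^ (i + 1) * ig_coeff i \<ge> 0"
  using assms by (cases i) (simp_all add: ig_coeff_def)

text \<open>For \<open>i \<ge> 1\<close>, the \<open>i\<close>-th derivative of \<open>x \<mapsto> sqrt (1 + c x)\<close>.\<close>
definition sqrt_affine_deriv :: "real \<Rightarrow> nat \<Rightarrow> real \<Rightarrow> real" where
  "sqrt_affine_deriv c i x = ig_coeff i * c ^ i * (1 + c * x) powr (1/2 - real i)"

definition sqrt_affine_taylor :: "real \<Rightarrow> real \<Rightarrow> real fps" where
  "sqrt_affine_taylor c x = egf_fps (\<lambda>i. sqrt_affine_deriv c i x)"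

definition ig_surv :: "real \<Rightarrow> real \<Rightarrow> real \<Rightarrow> real" where
  "ig_surv \<beta> c x = exp (- \<beta> * (sqrt (1 + c * x) - 1))"

text \<open>The \<open>m\<close>-th coefficient of \<open>exp (- \<beta> P)\<close>, \<open>P = sqrt_affine_taylor c x\<close>; since
  \<open>ig_surv \<beta> c (x + t) = ig_surv \<beta> c x * exp (- \<beta> P(t))\<close>, multiplying by \<open>m! ig_surv \<beta> c x\<close>
  gives the \<open>m\<close>-th derivative of \<open>ig_surv \<beta> c\<close> (Faa di Bruno).\<close>
definition ig_taylor_coeff :: "real \<Rightarrow> real \<Rightarrow> nat \<Rightarrow> real \<Rightarrow> real" where
  "ig_taylor_coeff \<beta> c m x = (\<Sum>k\<le>m. (-\<beta>) ^ k / fact k * (sqrt_affine_taylor c x ^ k) $ m)"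

definition ig_surv_nderiv :: "real \<Rightarrow> real \<Rightarrow> nat \<Rightarrow> real \<Rightarrow> real" where
  "ig_surv_nderiv \<beta> c m x = (-1) ^ m * fact m * ig_surv \<beta> c x * ig_taylor_coeff \<beta> c m x"

lemma ig_surv_nderiv_0: "ig_surv_nderiv \<beta> c 0 x = ig_surv \<beta> c x"
  by (simp add: ig_surv_nderiv_def ig_taylor_coeff_def)

lemma sqrt_affine_deriv_1:
  "1 + c * x > 0 \<Longrightarrow> sqrt_affine_deriv c 1 x = c / (2 * sqrt (1 + c * x))"
  unfolding sqrt_affine_deriv_def ig_coeff_def
  by (simp add: powr_minus_divide powr_half_sqrt[symmetric] powr_minus)

lemma has_real_derivative_sqrt_affine_deriv:
  assumes "1 + c * x > 0" "1 \<le> i"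
  shows "(sqrt_affine_deriv c i has_real_derivative sqrt_affine_deriv c (Suc i) x) (at x)"
proof -
  have "((\<lambda>x. ig_coeff i * c ^ i * (1 + c * x) powr (1/2 - real i)) has_real_derivative
      ig_coeff i * c ^ i * ((1/2 - real i) * (1 + c * x) powr (1/2 - real i - 1) * c)) (at x)"
    using assms(1) by (auto intro!: derivative_eq_intros)
  also have "ig_coeff i * c ^ i * ((1/2 - real i) * (1 + c * x) powr (1/2 - real i - 1) * c) =
      sqrt_affine_deriv c (Suc i) x"
    unfolding sqrt_affine_deriv_def ig_coeff_Suc[OF assms(2)] by (simp add: algebra_simps)
  finally show ?thesis by (simp add: sqrt_affine_deriv_def[abs_def])
qed

lemma has_real_derivative_ig_surv:
  assumes "1 + c * x > 0"
  shows "(ig_surv \<beta> c has_real_derivative - \<beta> * sqrt_affine_deriv c 1 x * ig_surv \<beta> c x) (at x)"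
proof -
  have "((\<lambda>x. exp (- \<beta> * (sqrt (1 + c * x) - 1))) has_real_derivative
      exp (- \<beta> * (sqrt (1 + c * x) - 1)) * (- \<beta> * (c / (2 * sqrt (1 + c * x))))) (at x)"
    using assms by (auto intro!: derivative_eq_intros simp: field_simps)
  then show ?thesis
    unfolding ig_surv_def[abs_def] sqrt_affine_deriv_1[OF assms] by (simp add: mult_ac)
qed

lemma sqrt_affine_taylor_nth:
  "sqrt_affine_taylor c x $ i = (if i = 0 then 0 else sqrt_affine_deriv c i x / fact i)"
  by (simp add: sqrt_affine_taylor_def egf_fps_nth)

lemma has_real_derivative_sqrt_affine_taylor_nth:
  assumes "1 + c * x > 0"
  shows "((\<lambda>x. sqrt_affine_taylor c x $ i) has_real_derivative
           (fps_deriv (sqrt_affine_taylor c x) - fps_const (sqrt_affine_deriv c 1 x)) $ i) (at x)"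
proof (cases "i = 0")
  case False
  have "((\<lambda>x. sqrt_affine_deriv c i x / fact i) has_real_derivative
      sqrt_affine_deriv c (Suc i) x / fact i) (at x)"
    using has_real_derivative_sqrt_affine_deriv[OF assms, of i] False by (intro DERIV_cdivide) simp
  moreover have "(fps_deriv (sqrt_affine_taylor c x) - fps_const (sqrt_affine_deriv c 1 x)) $ i =
      sqrt_affine_deriv c (Suc i) x / fact i"
    using False by (simp add: sqrt_affine_taylor_nth field_simps del: of_nat_Suc)
  ultimately show ?thesis using False by (simp add: sqrt_affine_taylor_nth)
qed (simp add: sqrt_affine_taylor_nth)

lemma ig_taylor_coeff_eq_sum_le:
  assumes "m \<le> N"
  shows "ig_taylor_coeff \<beta> c m x = (\<Sum>k\<le>N. (-\<beta>) ^ k / fact k * (sqrt_affine_taylor c x ^ k) $ m)"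
  unfolding ig_taylor_coeff_def
  by (rule sum.mono_neutral_left)
     (use assms fps_power_nth_eq_0[of "sqrt_affine_taylor c x"] in \<open>auto simp: sqrt_affine_taylor_nth\<close>)

lemma has_real_derivative_ig_taylor_coeff:
  assumes "1 + c * x > 0"
  shows "(ig_taylor_coeff \<beta> c m has_real_derivative
           of_nat (Suc m) * ig_taylor_coeff \<beta> c (Suc m) x +
           \<beta> * sqrt_affine_deriv c 1 x * ig_taylor_coeff \<beta> c m x) (at x)"
proof -
  let ?P = "sqrt_affine_taylor c x" and ?y = "sqrt_affine_deriv c 1 x"
  let ?Q = "fps_deriv ?P - fps_const ?y"
  have eq: "ig_taylor_coeff \<beta> c m =
      (\<lambda>x. \<Sum>k\<le>Suc m. (-\<beta>) ^ k / fact k * (sqrt_affine_taylor c x ^ k) $ m)"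
    by (rule ext, rule ig_taylor_coeff_eq_sum_le) simp
  have "(\<Sum>k\<le>Suc m. (-\<beta>) ^ k / fact k * (of_nat k * ?P ^ (k - 1) * ?Q) $ m) =
      of_nat (Suc m) * ig_taylor_coeff \<beta> c (Suc m) x
      - (\<Sum>k\<le>Suc m. (-\<beta>) ^ k / fact k * (of_nat k * ?y * (?P ^ (k - 1)) $ m))"
    unfolding fps_power_deriv_nth ig_taylor_coeff_def sum_distrib_left sum_subtractf[symmetric]
    by (rule sum.cong[OF refl]) (simp add: algebra_simps add_divide_distrib)
  also have "(\<Sum>k\<le>Suc m. (-\<beta>) ^ k / fact k * (of_nat k * ?y * (?P ^ (k - 1)) $ m)) =
      (\<Sum>k\<le>m. (-\<beta>) ^ Suc k / fact (Suc k) * (of_nat (Suc k) * ?y * (?P ^ k) $ m))"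
    by (subst sum.atMost_Suc_shift) simp
  also have "\<dots> = - \<beta> * ?y * ig_taylor_coeff \<beta> c m x"
    unfolding ig_taylor_coeff_def sum_distrib_left
    by (rule sum.cong[OF refl]) (simp add: field_simps del: of_nat_Suc)
  finally have "(\<Sum>k\<le>Suc m. (-\<beta>) ^ k / fact k * (of_nat k * ?P ^ (k - 1) * ?Q) $ m) =
      of_nat (Suc m) * ig_taylor_coeff \<beta> c (Suc m) x + \<beta> * ?y * ig_taylor_coeff \<beta> c m x"
    by simp
  moreover have "((\<lambda>x. \<Sum>k\<le>Suc m. (-\<beta>) ^ k / fact k * (sqrt_affine_taylor c x ^ k) $ m)
      has_real_derivative (\<Sum>k\<le>Suc m. (-\<beta>) ^ k / fact k * (of_nat k * ?P ^ (k - 1) * ?Q) $ m)) (at x)"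
    by (intro DERIV_sum DERIV_cmult has_real_derivative_fps_power_nth
        has_real_derivative_sqrt_affine_taylor_nth assms)
  ultimately show ?thesis unfolding eq by simp
qed

lemma has_real_derivative_ig_surv_nderiv:
  assumes "1 + c * x > 0"
  shows "(ig_surv_nderiv \<beta> c m has_real_derivative - ig_surv_nderiv \<beta> c (Suc m) x) (at x)"
proof -
  have "((\<lambda>x. (-1) ^ m * fact m * (ig_surv \<beta> c x * ig_taylor_coeff \<beta> c m x)) has_real_derivative
      (-1) ^ m * fact m * ((- \<beta> * sqrt_affine_deriv c 1 x * ig_surv \<beta> c x) * ig_taylor_coeff \<beta> c m x +
      (of_nat (Suc m) * ig_taylor_coeff \<beta> c (Suc m) x +
        \<beta> * sqrt_affine_deriv c 1 x * ig_taylor_coeff \<beta> c m x) * ig_surv \<beta> c x)) (at x)"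
    by (intro DERIV_cmult DERIV_mult has_real_derivative_ig_surv has_real_derivative_ig_taylor_coeff assms)
  then show ?thesis
    by (simp add: ig_surv_nderiv_def[abs_def] algebra_simps)
qed

lemma ig_surv_nderiv_nonneg:
  assumes "c \<ge> 0" "\<beta> \<ge> 0"
  shows "ig_surv_nderiv \<beta> c m x \<ge> 0"
proof -
  let ?P = "sqrt_affine_taylor c x"
  have P_sign: "(-1) ^ (i + 1) * ?P $ i \<ge> 0" for i
  proof (cases "i = 0")
    case False
    then have "(-1) ^ (i + 1) * ?P $ i =
        ((-1) ^ (i + 1) * ig_coeff i) * c ^ i * (1 + c * x) powr (1/2 - real i) / fact i"
      by (simp add: sqrt_affine_taylor_nth sqrt_affine_deriv_def)
    also have "\<dots> \<ge> 0"
      using assms(1) False ig_coeff_sign[of i]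
      by (intro divide_nonneg_pos mult_nonneg_nonneg[OF mult_nonneg_nonneg]) auto
    finally show ?thesis .
  qed (simp add: sqrt_affine_taylor_nth)
  have "ig_surv_nderiv \<beta> c m x =
      fact m * ig_surv \<beta> c x * (\<Sum>k\<le>m. \<beta> ^ k / fact k * ((-1) ^ (m + k) * (?P ^ k) $ m))"
    unfolding ig_surv_nderiv_def ig_taylor_coeff_def sum_distrib_left
    by (rule sum.cong[OF refl]) (simp add: power_add power_minus' algebra_simps)
  also have "\<dots> \<ge> 0"
  proof -
    have "0 \<le> (\<Sum>k\<le>m. \<beta> ^ k / fact k * ((-1) ^ (m + k) * (?P ^ k) $ m))"
      by (rule sum_nonneg, rule mult_nonneg_nonneg)
         (use assms fps_power_nth_sign[OF _ P_sign] in \<open>simp_all add: sqrt_affine_taylor_nth\<close>)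
    then show ?thesis by (simp add: ig_surv_def)
  qed
  finally show ?thesis .
qed

lemma ig_sum_pdf_eq:
  assumes "lam > 0" "mu > 0" "n \<ge> 1"
  shows "ig_sum_pdf lam mu n x =
    (if x > 0 then ig_surv_nderiv (lam / mu) (2 * mu\<^sup>2 / lam) n x * x ^ (n - 1) / fact (n - 1) else 0)"
proof (cases "x > 0")
  case True
  define c \<beta> where "c = 2 * mu\<^sup>2 / lam" and "\<beta> = lam / mu"
  let ?P = "sqrt_affine_taylor c x"
  have "Gamma (real n) = fact (n - 1)"
    using Gamma_fact[of "n - 1"] assms by simp
  moreover have "(\<Sum>k=1..n. (-1) ^ (n + k) * \<beta> ^ k * ig_surv \<beta> c x * ig_u lam mu n k x) =
      ig_surv_nderiv \<beta> c n x"
  proof -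
    have "ig_u lam mu n k x = fact n / fact k * (?P ^ k) $ n" for k
      unfolding ig_u_def Let_def c_def[symmetric] sqrt_affine_taylor_def bell_partial_eq_fps_power_nth
      by (simp add: sqrt_affine_deriv_def)
    then have "(\<Sum>k=1..n. (-1) ^ (n + k) * \<beta> ^ k * ig_surv \<beta> c x * ig_u lam mu n k x) =
        (-1) ^ n * fact n * ig_surv \<beta> c x * (\<Sum>k=1..n. (-\<beta>) ^ k / fact k * (?P ^ k) $ n)"
      by (simp add: sum_distrib_left power_add power_minus' algebra_simps)
    also have "(\<Sum>k=1..n. (-\<beta>) ^ k / fact k * (?P ^ k) $ n) = ig_taylor_coeff \<beta> c n x"
      unfolding ig_taylor_coeff_def using assms(3)
      by (simp add: atMost_atLeast0 sum.atLeast_Suc_atMost)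
    finally show ?thesis by (simp add: ig_surv_nderiv_def)
  qed
  ultimately show ?thesis
    using True by (simp add: ig_sum_pdf_def Let_def ig_surv_def c_def \<beta>_def mult_ac)
qed (simp add: ig_sum_pdf_def)

section \<open>Completely monotone functions\<close>

text \<open>\<open>E m\<close> plays the role of \<open>(-1)^m\<close> times the \<open>m\<close>-th derivative of a completely monotone
  function \<open>E 0\<close> on \<open>[0, \<infinity>)\<close> that vanishes at infinity.\<close>
locale completely_monotone_chain =
  fixes E :: "nat \<Rightarrow> real \<Rightarrow> real"
  assumes has_derivative: "\<And>m x. 0 \<le> x \<Longrightarrow> (E m has_real_derivative - E (Suc m) x) (at x)"
    and nonneg: "\<And>m x. 0 \<le> x \<Longrightarrow> 0 \<le> E m x"
    and tendsto_0: "(E 0 \<longlongrightarrow> 0) at_top"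
begin

lemma antimono:
  assumes "0 \<le> y" "y \<le> x"
  shows "E m x \<le> E m y"
proof (rule DERIV_nonpos_imp_nonincreasing[OF assms(2)])
  fix t assume "y \<le> t" "t \<le> x"
  then have "0 \<le> t" using assms by simp
  then show "\<exists>d. (E m has_real_derivative d) (at t) \<and> d \<le> 0"
    using has_derivative nonneg by (metis neg_le_0_iff_le)
qed

text \<open>By the mean value theorem on \<open>[x/2, x]\<close> and monotonicity,
  \<open>x/2 \<cdot> E (m+1) x \<le> E m (x/2)\<close>; induction on \<open>m\<close>.\<close>
lemma tendsto_power_mult: "((\<lambda>x. x ^ m * E m x) \<longlongrightarrow> 0) at_top"
proof (induction m)
  case 0
  then show ?case using tendsto_0 by simp
next
  case (Suc m)
  have "filterlim (\<lambda>x::real. x / 2) at_top at_top" by real_asymp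
  then have "((\<lambda>x. (x / 2) ^ m * E m (x / 2)) \<longlongrightarrow> 0) at_top"
    by (rule filterlim_compose[OF Suc.IH, unfolded o_def])
  then have bound: "((\<lambda>x. 2 ^ Suc m * ((x / 2) ^ m * E m (x / 2))) \<longlongrightarrow> 0) at_top"
    using tendsto_mult_right_zero by blast
  show ?case
  proof (rule tendsto_sandwich[OF _ _ tendsto_const bound])
    show "\<forall>\<^sub>F x in at_top. 0 \<le> x ^ Suc m * E (Suc m) x"
      using eventually_ge_at_top[of 0] by eventually_elim (simp add: nonneg)
    show "\<forall>\<^sub>F x in at_top. x ^ Suc m * E (Suc m) x \<le> 2 ^ Suc m * ((x / 2) ^ m * E m (x / 2))"
      using eventually_gt_at_top[of 0]
    proof eventually_elim
      fix x :: real assume x: "x > 0"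
      have "\<And>t. x / 2 \<le> t \<Longrightarrow> t \<le> x \<Longrightarrow> (E m has_real_derivative - E (Suc m) t) (at t)"
        using x by (intro has_derivative) simp
      from MVT2[of "x / 2" x, OF _ this] x obtain z where z: "x / 2 < z" "z < x"
        "E m x - E m (x / 2) = (x - x / 2) * (- E (Suc m) z)" by auto
      have "(x / 2) * E (Suc m) x \<le> (x / 2) * E (Suc m) z"
        using antimono[of z x "Suc m"] z x by (intro mult_left_mono) auto
      also have "\<dots> = E m (x / 2) - E m x"
        using z(3) by (simp add: algebra_simps)
      also have "\<dots> \<le> E m (x / 2)"
        using nonneg[of x m] x by simp
      finally have "(x / 2) * E (Suc m) x \<le> E m (x / 2)" .
      then have "2 * x ^ m * ((x / 2) * E (Suc m) x) \<le> 2 * x ^ m * E m (x / 2)"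
        using x by (intro mult_left_mono) auto
      then show "x ^ Suc m * E (Suc m) x \<le> 2 ^ Suc m * ((x / 2) ^ m * E m (x / 2))"
        by (simp add: power_divide algebra_simps)
    qed
  qed
qed

lemma has_real_derivative_shift:
  assumes "0 \<le> B" "0 \<le> u"
  shows "((\<lambda>u. E m (B + u)) has_real_derivative - E (Suc m) (B + u)) (at u)"
  using DERIV_chain2[OF has_derivative[of "B + u" m] DERIV_add[OF DERIV_const DERIV_ident]] assms
  by simp

text \<open>The derivative telescopes.\<close>
lemma has_real_derivative_Taylor_sum:
  assumes "0 \<le> B" "0 \<le> u" "1 \<le> n"
  shows "((\<lambda>u. \<Sum>m<n. u ^ m / fact m * E m (B + u)) has_real_derivative
           - (E n (B + u) * u ^ (n - 1) / fact (n - 1))) (at u)"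
proof -
  define a where "a m = (if m = 0 then 0 else u ^ (m - 1) / fact (m - 1) * E m (B + u))" for m
  have "((\<lambda>u. u ^ m / fact m * E m (B + u)) has_real_derivative a m - a (Suc m)) (at u)" for m
  proof -
    have "((\<lambda>u. u ^ m / fact m * E m (B + u)) has_real_derivative
        of_nat m * u ^ (m - 1) / fact m * E m (B + u) + (- E (Suc m) (B + u)) * (u ^ m / fact m)) (at u)"
      using assms by (auto intro!: derivative_eq_intros has_real_derivative_shift simp: diff_divide_distrib)
    moreover have "of_nat m * u ^ (m - 1) / fact m * E m (B + u) + (- E (Suc m) (B + u)) * (u ^ m / fact m)
        = a m - a (Suc m)"
      by (cases m) (simp_all add: a_def field_simps del: of_nat_Suc)
    ultimately show ?thesis by simp
  qed
  then have "((\<lambda>u. \<Sum>m<n. u ^ m / fact m * E m (B + u)) has_real_derivative (\<Sum>m<n. a m - a (Suc m))) (at u)"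
    by (intro DERIV_sum)
  moreover have "(\<Sum>m<n. a m - a (Suc m)) = - (E n (B + u) * u ^ (n - 1) / fact (n - 1))"
    using sum_lessThan_telescope'[of a n] assms by (simp add: a_def)
  ultimately show ?thesis by simp
qed

lemma tendsto_Taylor_sum:
  assumes "0 \<le> B"
  shows "((\<lambda>u. \<Sum>m<n. u ^ m / fact m * E m (B + u)) \<longlongrightarrow> 0) at_top"
proof (rule tendsto_null_sum)
  fix m
  have "((\<lambda>u. (B + u) ^ m * E m (B + u)) \<longlongrightarrow> 0) at_top"
    using filterlim_compose[OF tendsto_power_mult filterlim_tendsto_add_at_top[OF tendsto_const filterlim_ident]]
    by (simp add: o_def)
  then have lim: "((\<lambda>u. (B + u) ^ m * E m (B + u) / fact m) \<longlongrightarrow> 0) at_top"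
    using tendsto_divide_zero by blast
  have lower: "\<forall>\<^sub>F u in at_top. 0 \<le> u ^ m / fact m * E m (B + u)"
    using eventually_ge_at_top[of 0] by eventually_elim (use assms nonneg in simp)
  have upper: "\<forall>\<^sub>F u in at_top. u ^ m / fact m * E m (B + u) \<le> (B + u) ^ m * E m (B + u) / fact m"
    using eventually_ge_at_top[of 0]
  proof eventually_elim
    case (elim u)
    then have "u ^ m \<le> (B + u) ^ m" using assms by (intro power_mono) auto
    then show ?case using nonneg[of "B + u" m] assms elim
      by (simp add: divide_right_mono mult_right_mono)
  qed
  show "((\<lambda>u. u ^ m / fact m * E m (B + u)) \<longlongrightarrow> 0) at_top"
    by (rule tendsto_sandwich[OF lower upper tendsto_const lim])
qed

text \<open>Taylor's formula with integral remainder, expanded at \<open>B\<close> and evaluated at infinity.\<close>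
lemma nn_integral_Taylor:
  assumes "0 \<le> B" "1 \<le> n"
  shows "(\<integral>\<^sup>+ u. ennreal (E n (B + u) * u ^ (n - 1) / fact (n - 1)) * indicator {0<..} u \<partial>lborel)
         = ennreal (E 0 B)"
proof -
  define H where "H u = (\<Sum>m<n. u ^ m / fact m * E m (B + u))" for u
  define f where "f u = indicator {0..} u * (E n (B + u) * u ^ (n - 1) / fact (n - 1))" for u :: real
  have f_meas: "f \<in> borel_measurable borel"
  proof -
    have "continuous_on {0..} (\<lambda>u. E n (B + u) * u ^ (n - 1) / fact (n - 1))"
      using has_real_derivative_shift assms
      by (intro continuous_at_imp_continuous_on ballI continuous_intros DERIV_isCont) auto
    then have "(\<lambda>u. indicator {0..} u *\<^sub>R (E n (B + u) * u ^ (n - 1) / fact (n - 1)))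
        \<in> borel_measurable borel"
      by (intro borel_measurable_continuous_on_indicator) auto
    then show ?thesis by (simp add: f_def[abs_def])
  qed
  have "(\<integral>\<^sup>+ u. ennreal (f u) * indicator {0..} u \<partial>lborel) = 0 - (- H 0)"
  proof (rule nn_integral_FTC_atLeast[OF f_meas])
    show "((\<lambda>u. - H u) has_real_derivative f u) (at u)" if "0 \<le> u" for u
      using DERIV_minus[OF has_real_derivative_Taylor_sum[OF assms(1) that assms(2)]] that
      by (simp add: H_def[abs_def] f_def)
    show "0 \<le> f u" if "0 \<le> u" for u
      using that assms nonneg[of "B + u" n] by (simp add: f_def)
    show "((\<lambda>u. - H u) \<longlongrightarrow> 0) at_top"
      using tendsto_minus[OF tendsto_Taylor_sum[OF assms(1)]] by (simp add: H_def[abs_def])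
  qed
  also have "H 0 = E 0 B"
    using assms(2) by (cases n) (simp_all add: H_def lessThan_Suc_atMost sum.atMost_shift)
  finally have "(\<integral>\<^sup>+ u. ennreal (f u) * indicator {0..} u \<partial>lborel) = E 0 B" by simp
  moreover have "(\<integral>\<^sup>+ u. ennreal (f u) * indicator {0<..} u \<partial>lborel) =
      (\<integral>\<^sup>+ u. ennreal (f u) * indicator {0..} u \<partial>lborel)"
    by (rule nn_integral_cong_AE)
       (use AE_lborel_singleton[of 0] in \<open>auto elim!: eventually_mono split: split_indicator\<close>)
  moreover have "(\<integral>\<^sup>+ u. ennreal (f u) * indicator {0<..} u \<partial>lborel) =
      (\<integral>\<^sup>+ u. ennreal (E n (B + u) * u ^ (n - 1) / fact (n - 1)) * indicator {0<..} u \<partial>lborel)"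
    by (intro nn_integral_cong) (simp add: f_def split: split_indicator)
  ultimately show ?thesis by simp
qed

end

lemma completely_monotone_chain_ig_surv_nderiv:
  assumes "0 < c" "0 < \<beta>"
  shows "completely_monotone_chain (ig_surv_nderiv \<beta> c)"
proof
  show "(ig_surv_nderiv \<beta> c m has_real_derivative - ig_surv_nderiv \<beta> c (Suc m) x) (at x)"
    if "0 \<le> x" for m x
    using assms that by (intro has_real_derivative_ig_surv_nderiv) (simp add: add_pos_nonneg)
  show "0 \<le> ig_surv_nderiv \<beta> c m x" for m x
    using assms by (intro ig_surv_nderiv_nonneg) auto
  have "filterlim (\<lambda>x. - \<beta> * (sqrt (1 + c * x) - 1)) at_bot at_top"
    using assms by real_asymp
  then have "(ig_surv \<beta> c \<longlongrightarrow> 0) at_top"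
    unfolding ig_surv_def[abs_def] using filterlim_compose[OF exp_at_bot] by (simp add: o_def)
  then show "(ig_surv_nderiv \<beta> c 0 \<longlongrightarrow> 0) at_top"
    by (simp add: ig_surv_nderiv_0[abs_def])
qed

section \<open>Integrals of functions of the coordinate sum\<close>

lemma nn_integral_power_div_fact_Ioo:
  assumes "1 \<le> r" "0 < v"
  shows "(\<integral>\<^sup>+ u. ennreal (u ^ (r - 1) / fact (r - 1)) * indicator {0<..<v} u \<partial>lborel) =
         ennreal (v ^ r / fact r)"
proof -
  have "((\<lambda>u. u ^ r / fact r) has_real_derivative u ^ (r - 1) / fact (r - 1)) (at u)" for u :: real
  proof -
    have "real r * u ^ (r - 1) / fact r = u ^ (r - 1) / fact (r - 1)"
      using assms(1) by (cases r) (simp_all add: field_simps del: of_nat_Suc)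
    then show ?thesis
      using DERIV_cdivide[OF DERIV_pow[of r u], of "fact r"] by simp
  qed
  then have "(\<integral>\<^sup>+ u. ennreal (u ^ (r - 1) / fact (r - 1)) * indicator {0..v} u \<partial>lborel) =
      ennreal (v ^ r / fact r - 0 ^ r / fact r)"
    using assms by (intro nn_integral_FTC_Icc) auto
  moreover have "AE u in lborel. u \<noteq> 0 \<and> u \<noteq> v"
    using AE_lborel_singleton[of 0] AE_lborel_singleton[of v] by eventually_elim auto
  then have "(\<integral>\<^sup>+ u. ennreal (u ^ (r - 1) / fact (r - 1)) * indicator {0<..<v} u \<partial>lborel) =
      (\<integral>\<^sup>+ u. ennreal (u ^ (r - 1) / fact (r - 1)) * indicator {0..v} u \<partial>lborel)"
    by (intro nn_integral_cong_AE, eventually_elim) (auto split: split_indicator)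
  ultimately show ?thesis using assms by (simp add: power_0_left)
qed

lemma nn_integral_tail_power:
  fixes F :: "real \<Rightarrow> ennreal"
  assumes [measurable]: "F \<in> borel_measurable borel" and "1 \<le> r"
  shows "(\<integral>\<^sup>+ u. (\<integral>\<^sup>+ v. F v * indicator {u<..} v \<partial>lborel) *
             ennreal (u ^ (r - 1) / fact (r - 1)) * indicator {0<..} u \<partial>lborel) =
         (\<integral>\<^sup>+ v. F v * ennreal (v ^ r / fact r) * indicator {0<..} v \<partial>lborel)"
proof -
  have [measurable]: "Measurable.pred (borel \<Otimes>\<^sub>M borel) (\<lambda>x::real \<times> real. fst x \<in> {snd x<..})"
    "Measurable.pred (borel \<Otimes>\<^sub>M borel) (\<lambda>x::real \<times> real. snd x \<in> {fst x<..})"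
    unfolding greaterThan_iff by measurable
  let ?g = "\<lambda>u v. F v * ennreal (u ^ (r - 1) / fact (r - 1)) * indicator {0<..} u * indicator {u<..} v"
  have "(\<integral>\<^sup>+ u. (\<integral>\<^sup>+ v. F v * indicator {u<..} v \<partial>lborel) *
             ennreal (u ^ (r - 1) / fact (r - 1)) * indicator {0<..} u \<partial>lborel) =
        (\<integral>\<^sup>+ u. \<integral>\<^sup>+ v. ?g u v \<partial>lborel \<partial>lborel)"
  proof (rule nn_integral_cong)
    fix u :: real
    have "(\<integral>\<^sup>+ v. F v * indicator {u<..} v \<partial>lborel) * ennreal (u ^ (r - 1) / fact (r - 1)) *
        indicator {0<..} u = (ennreal (u ^ (r - 1) / fact (r - 1)) * indicator {0<..} u) *
        (\<integral>\<^sup>+ v. F v * indicator {u<..} v \<partial>lborel)"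
      by (simp add: mult_ac)
    also have "\<dots> = (\<integral>\<^sup>+ v. ennreal (u ^ (r - 1) / fact (r - 1)) * indicator {0<..} u *
        (F v * indicator {u<..} v) \<partial>lborel)"
      by (rule nn_integral_cmult[symmetric]) measurable
    finally show "(\<integral>\<^sup>+ v. F v * indicator {u<..} v \<partial>lborel) * ennreal (u ^ (r - 1) / fact (r - 1)) *
        indicator {0<..} u = (\<integral>\<^sup>+ v. ?g u v \<partial>lborel)"
      by (simp add: mult_ac)
  qed
  also have "\<dots> = (\<integral>\<^sup>+ v. \<integral>\<^sup>+ u. ?g u v \<partial>lborel \<partial>lborel)"
    by (rule lborel_pair.Fubini') measurable
  also have "\<dots> = (\<integral>\<^sup>+ v. F v * ennreal (v ^ r / fact r) * indicator {0<..} v \<partial>lborel)"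
  proof (rule nn_integral_cong)
    fix v :: real
    have "(\<integral>\<^sup>+ u. ?g u v \<partial>lborel) =
        F v * (\<integral>\<^sup>+ u. ennreal (u ^ (r - 1) / fact (r - 1)) * indicator {0<..<v} u \<partial>lborel)"
      by (subst nn_integral_cmult[symmetric], measurable)
         (intro nn_integral_cong, auto simp: mult_ac split: split_indicator)
    then show "(\<integral>\<^sup>+ u. ?g u v \<partial>lborel) = F v * ennreal (v ^ r / fact r) * indicator {0<..} v"
      using nn_integral_power_div_fact_Ioo[OF assms(2), of v] by (cases "0 < v") auto
  qed
  finally show ?thesis .
qed

lemma nn_integral_lborel_shift_Ioi:
  fixes F :: "real \<Rightarrow> ennreal"
  assumes [measurable]: "F \<in> borel_measurable borel"
  shows "(\<integral>\<^sup>+ y. F (y + s) * indicator {b<..} y \<partial>lborel) =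
         (\<integral>\<^sup>+ v. F (b + s + v) * indicator {0<..} v \<partial>lborel)"
  using nn_integral_real_affine[of "\<lambda>y. F (y + s) * indicator {b<..} y" 1 b]
  by (simp add: add_ac indicator_def)

lemma nn_integral_PiM_insert_sum_orthant:
  fixes F :: "real \<Rightarrow> ennreal" and b :: "nat \<Rightarrow> real"
  assumes "finite N" "i \<notin> N" and [measurable]: "F \<in> borel_measurable borel"
  shows "(\<integral>\<^sup>+ z. F (\<Sum>j\<in>insert i N. z j) * indicator {z. \<forall>j\<in>insert i N. b j < z j} z
            \<partial>PiM (insert i N) (\<lambda>_. lborel)) =
         (\<integral>\<^sup>+ x. (\<integral>\<^sup>+ y. F (y + (\<Sum>j\<in>N. x j)) * indicator {b i<..} y \<partial>lborel) *
            indicator {z. \<forall>j\<in>N. b j < z j} x \<partial>PiM N (\<lambda>_. lborel))"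
proof -
  interpret product_sigma_finite "\<lambda>_. lborel" by standard
  have "(\<integral>\<^sup>+ z. F (\<Sum>j\<in>insert i N. z j) * indicator {z. \<forall>j\<in>insert i N. b j < z j} z
        \<partial>PiM (insert i N) (\<lambda>_. lborel)) =
      (\<integral>\<^sup>+ x. \<integral>\<^sup>+ y. F (\<Sum>j\<in>insert i N. (x(i := y)) j) *
        indicator {z. \<forall>j\<in>insert i N. b j < z j} (x(i := y)) \<partial>lborel \<partial>PiM N (\<lambda>_. lborel))"
    by (rule product_nn_integral_insert) (use assms in measurable)
  also have "\<dots> = (\<integral>\<^sup>+ x. (\<integral>\<^sup>+ y. F (y + (\<Sum>j\<in>N. x j)) * indicator {b i<..} y \<partial>lborel) *
      indicator {z. \<forall>j\<in>N. b j < z j} x \<partial>PiM N (\<lambda>_. lborel))"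
  proof (rule nn_integral_cong)
    fix x :: "nat \<Rightarrow> real"
    have "(\<Sum>j\<in>insert i N. (x(i := y)) j) = y + (\<Sum>j\<in>N. x j)" for y
      using assms by simp (intro sum.cong, auto)
    moreover have "indicator {z. \<forall>j\<in>insert i N. b j < z j} (x(i := y)) =
        (indicator {b i<..} y * indicator {z. \<forall>j\<in>N. b j < z j} x :: ennreal)" for y
      using assms by (auto split: split_indicator)
    ultimately show "(\<integral>\<^sup>+ y. F (\<Sum>j\<in>insert i N. (x(i := y)) j) *
        indicator {z. \<forall>j\<in>insert i N. b j < z j} (x(i := y)) \<partial>lborel) =
        (\<integral>\<^sup>+ y. F (y + (\<Sum>j\<in>N. x j)) * indicator {b i<..} y \<partial>lborel) *
        indicator {z. \<forall>j\<in>N. b j < z j} x"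
      by (subst nn_integral_multc[symmetric]) (measurable, simp add: mult.assoc)
  qed
  finally show ?thesis .
qed

text \<open>The slice of the orthant \<open>z > b\<close> on which \<open>\<Sum>z = \<Sum>b + u\<close> has volume \<open>u^(r-1)/(r-1)!\<close>.\<close>
lemma nn_integral_PiM_sum_orthant:
  fixes F :: "real \<Rightarrow> ennreal" and b :: "nat \<Rightarrow> real"
  assumes "finite N" "N \<noteq> {}" "F \<in> borel_measurable borel"
  shows "(\<integral>\<^sup>+ z. F (\<Sum>j\<in>N. z j) * indicator {z. \<forall>j\<in>N. b j < z j} z \<partial>PiM N (\<lambda>_. lborel)) =
         (\<integral>\<^sup>+ u. F ((\<Sum>j\<in>N. b j) + u) * ennreal (u ^ (card N - 1) / fact (card N - 1)) *
            indicator {0<..} u \<partial>lborel)"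
  using assms
proof (induction N arbitrary: F rule: finite_ne_induct)
  case (singleton i)
  interpret product_sigma_finite "\<lambda>_. lborel" by standard
  have [measurable]: "F \<in> borel_measurable borel" by fact
  have "(\<integral>\<^sup>+ z. F (\<Sum>j\<in>{i}. z j) * indicator {z. \<forall>j\<in>{i}. b j < z j} z \<partial>PiM {i} (\<lambda>_. lborel)) =
        (\<integral>\<^sup>+ z. (\<lambda>y. F (y + 0) * indicator {b i<..} y) (z i) \<partial>PiM {i} (\<lambda>_. lborel))"
    by (intro nn_integral_cong) (auto split: split_indicator)
  also have "\<dots> = (\<integral>\<^sup>+ y. F (y + 0) * indicator {b i<..} y \<partial>lborel)"
    by (rule product_nn_integral_singleton) measurable
  also have "\<dots> = (\<integral>\<^sup>+ v. F (b i + 0 + v) * indicator {0<..} v \<partial>lborel)"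
    by (rule nn_integral_lborel_shift_Ioi) measurable
  finally show ?case by simp
next
  case (insert i N)
  have [measurable]: "F \<in> borel_measurable borel" by fact
  define r where "r = card N"
  have r: "1 \<le> r" "card (insert i N) - 1 = r"
    using insert.hyps by (simp_all add: r_def Suc_le_eq card_gt_0_iff)
  define G where "G s = (\<integral>\<^sup>+ y. F (y + s) * indicator {b i<..} y \<partial>lborel)" for s
  have [measurable]: "G \<in> borel_measurable borel"
    unfolding G_def by measurable
  let ?B = "\<Sum>j\<in>insert i N. b j"
  have G_shift: "G ((\<Sum>j\<in>N. b j) + u) = (\<integral>\<^sup>+ v. F (?B + v) * indicator {u<..} v \<partial>lborel)" for u
  proof -
    have "G ((\<Sum>j\<in>N. b j) + u) = (\<integral>\<^sup>+ w. F (?B + u + w) * indicator {0<..} w \<partial>lborel)"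
      unfolding G_def nn_integral_lborel_shift_Ioi[OF insert.prems(1)]
      using insert.hyps by (simp add: add_ac)
    also have "\<dots> = (\<integral>\<^sup>+ v. F (?B + v) * indicator {u<..} v \<partial>lborel)"
      using nn_integral_lborel_shift_Ioi[of "\<lambda>v. F (?B + v)" 0 u] by (simp add: add_ac)
    finally show ?thesis .
  qed
  have "(\<integral>\<^sup>+ z. F (\<Sum>j\<in>insert i N. z j) * indicator {z. \<forall>j\<in>insert i N. b j < z j} z
        \<partial>PiM (insert i N) (\<lambda>_. lborel)) =
      (\<integral>\<^sup>+ x. G (\<Sum>j\<in>N. x j) * indicator {z. \<forall>j\<in>N. b j < z j} x \<partial>PiM N (\<lambda>_. lborel))"
    unfolding G_def using insert.hyps by (intro nn_integral_PiM_insert_sum_orthant) measurable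
  also have "\<dots> = (\<integral>\<^sup>+ u. (\<integral>\<^sup>+ v. F (?B + v) * indicator {u<..} v \<partial>lborel) *
      ennreal (u ^ (r - 1) / fact (r - 1)) * indicator {0<..} u \<partial>lborel)"
    unfolding r_def G_shift[symmetric] by (rule insert.IH) measurable
  also have "\<dots> = (\<integral>\<^sup>+ v. F (?B + v) * ennreal (v ^ r / fact r) * indicator {0<..} v \<partial>lborel)"
    by (rule nn_integral_tail_power[OF _ r(1)]) measurable
  finally show ?case unfolding r .
qed

definition upper_orthant :: "nat set \<Rightarrow> (nat \<Rightarrow> real) \<Rightarrow> (nat \<Rightarrow> real) set" where
  "upper_orthant N a = {z \<in> (\<Pi>\<^sub>E i\<in>N. UNIV). \<forall>i\<in>N. a i < z i}"

lemma sets_PiM_lborel_eq_sigma_upper_orthants: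
  assumes "finite N"
  shows "sets (PiM N (\<lambda>_. lborel)) = sigma_sets (\<Pi>\<^sub>E i\<in>N. UNIV) (range (upper_orthant N))"
proof -
  let ?P = "{{f \<in> (\<Pi>\<^sub>E i\<in>N. UNIV). \<forall>i\<in>J. f i \<in> A i} | A J. J \<in> {N} \<and> A \<in> J \<rightarrow> range greaterThan}"
  have "sets (PiM N (\<lambda>_. lborel)) = sets (PiM N (\<lambda>_. sigma UNIV (range greaterThan) :: real measure))"
    by (rule sets_PiM_cong) (auto simp: borel_Ioi)
  also have "\<dots> = sets (sigma (\<Pi>\<^sub>E i\<in>N. UNIV) ?P)"
  proof (rule sets_PiM_sigma)
    show "\<exists>S\<subseteq>range greaterThan. countable S \<and> (UNIV :: real set) = \<Union>S"
    proof (intro exI conjI)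
      show "(UNIV :: real set) = \<Union> (range (\<lambda>k::nat. {- real k<..}))"
      proof safe
        fix x :: real
        obtain k :: nat where "- x < real k" using reals_Archimedean2 by blast
        then show "x \<in> \<Union> (range (\<lambda>k::nat. {- real k<..}))" by (intro UN_I[of k]) auto
      qed auto
    qed auto
  qed (use assms in auto)
  also have "\<dots> = sigma_sets (\<Pi>\<^sub>E i\<in>N. UNIV) ?P"
    by (rule sets_measure_of) auto
  also have "?P = range (upper_orthant N)"
  proof (intro equalityI subsetI)
    fix X :: "(nat \<Rightarrow> real) set" assume "X \<in> ?P"
    then obtain A where X: "X = {f \<in> (\<Pi>\<^sub>E i\<in>N. UNIV). \<forall>i\<in>N. f i \<in> A i}"
      and "A \<in> N \<rightarrow> range greaterThan" by blast
    then have "\<forall>i\<in>N. \<exists>a. A i = {a<..}" by auto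
    then obtain a where "\<forall>i\<in>N. A i = {a i<..}" by metis
    then show "X \<in> range (upper_orthant N)"
      unfolding X by (intro image_eqI[of _ _ a]) (auto simp: upper_orthant_def)
  next
    fix X assume "X \<in> range (upper_orthant N)"
    then obtain a where "X = upper_orthant N a" by auto
    then show "X \<in> ?P"
      by (intro CollectI exI[of _ "\<lambda>i. {a i<..}"] exI[of _ N]) (auto simp: upper_orthant_def)
  qed
  finally show ?thesis .
qed

lemma measure_eqI_upper_orthants:
  assumes "finite N"
    and sets: "sets A = sets (PiM N (\<lambda>_. lborel))" "sets B = sets (PiM N (\<lambda>_. lborel))"
    and eq: "\<And>a. emeasure A (upper_orthant N a) = emeasure B (upper_orthant N a)"
    and fin: "\<And>a. emeasure A (upper_orthant N a) \<noteq> \<infinity>"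
  shows "A = B"
proof (rule measure_eqI_generator_eq[where E = "range (upper_orthant N)"
      and \<Omega> = "\<Pi>\<^sub>E i\<in>N. UNIV" and A = "\<lambda>k. upper_orthant N (\<lambda>_. - real k)"])
  show "Int_stable (range (upper_orthant N))"
  proof (rule Int_stableI, safe)
    fix a a'
    have "upper_orthant N a \<inter> upper_orthant N a' = upper_orthant N (\<lambda>j. max (a j) (a' j))"
      by (auto simp: upper_orthant_def)
    then show "upper_orthant N a \<inter> upper_orthant N a' \<in> range (upper_orthant N)" by auto
  qed
  show "(\<Union>k. upper_orthant N (\<lambda>_. - real k)) = (\<Pi>\<^sub>E i\<in>N. UNIV)"
  proof safe
    fix f assume f: "f \<in> (\<Pi>\<^sub>E i\<in>N. (UNIV :: real set))"
    obtain k :: nat where k: "Max ((\<lambda>i. - f i) ` N) < real k" using reals_Archimedean2 by blast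
    have "- real k < f i" if "i \<in> N" for i
    proof -
      have "- f i \<le> Max ((\<lambda>i. - f i) ` N)" using assms(1) that by (intro Max_ge) auto
      with k show ?thesis by linarith
    qed
    then show "f \<in> (\<Union>k. upper_orthant N (\<lambda>_. - real k))" using f by (auto simp: upper_orthant_def)
  qed (auto simp: upper_orthant_def)
  show "sets A = sigma_sets (\<Pi>\<^sub>E i\<in>N. UNIV) (range (upper_orthant N))"
    "sets B = sigma_sets (\<Pi>\<^sub>E i\<in>N. UNIV) (range (upper_orthant N))"
    using sets sets_PiM_lborel_eq_sigma_upper_orthants[OF assms(1)] by simp_all
  show "range (upper_orthant N) \<subseteq> Pow (\<Pi>\<^sub>E i\<in>N. UNIV)"
    by (auto simp: upper_orthant_def)
  show "range (\<lambda>k. upper_orthant N (\<lambda>_. - real k)) \<subseteq> range (upper_orthant N)"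
    by auto
qed (use eq fin in auto)

lemma distr_sum_density_PiM_orthant:
  fixes F :: "real \<Rightarrow> ennreal" and N :: "nat set"
  assumes "finite N" "N \<noteq> {}" and [measurable]: "F \<in> borel_measurable borel"
  shows "distr (density (PiM N (\<lambda>_. lborel)) (\<lambda>z. F (\<Sum>j\<in>N. z j) * indicator {z. \<forall>j\<in>N. 0 < z j} z))
           lborel (\<lambda>z. \<Sum>j\<in>N. z j) =
         density lborel (\<lambda>s. F s * ennreal (s ^ (card N - 1) / fact (card N - 1)) * indicator {0<..} s)"
    (is "distr (density ?P ?g) lborel ?sum = _")
proof (rule measure_eqI)
  fix A :: "real set" assume "A \<in> sets (distr (density ?P ?g) lborel ?sum)"
  then have [measurable]: "A \<in> sets borel" by simp
  have [measurable]: "?sum \<in> borel_measurable ?P" using assms(1) by measurable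
  have "?g \<in> borel_measurable ?P" using assms(1) by measurable
  have "emeasure (distr (density ?P ?g) lborel ?sum) A = emeasure (density ?P ?g) (?sum -` A \<inter> space ?P)"
    by (subst emeasure_distr) auto
  also have "\<dots> = (\<integral>\<^sup>+ z. ?g z * indicator (?sum -` A \<inter> space ?P) z \<partial>?P)"
    by (rule emeasure_density[OF \<open>?g \<in> borel_measurable ?P\<close>]) measurable
  also have "\<dots> = (\<integral>\<^sup>+ z. (F (?sum z) * indicator A (?sum z)) * indicator {z. \<forall>j\<in>N. (0::real) < z j} z \<partial>?P)"
    by (intro nn_integral_cong) (auto split: split_indicator)
  also have "\<dots> = (\<integral>\<^sup>+ s. F s * indicator A s * ennreal (s ^ (card N - 1) / fact (card N - 1)) *
      indicator {0<..} s \<partial>lborel)"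
    using nn_integral_PiM_sum_orthant[OF assms(1,2), of "\<lambda>s. F s * indicator A s" "\<lambda>_. 0"] by simp
  also have "\<dots> = emeasure (density lborel (\<lambda>s. F s * ennreal (s ^ (card N - 1) / fact (card N - 1)) *
      indicator {0<..} s)) A"
    by (simp add: emeasure_density mult_ac)
  finally show "emeasure (distr (density ?P ?g) lborel ?sum) A = emeasure (density lborel
      (\<lambda>s. F s * ennreal (s ^ (card N - 1) / fact (card N - 1)) * indicator {0<..} s)) A" .
qed simp

section \<open>Schur-constant survival functions\<close>

locale Schur_constant_survival = prob_space M for M :: "'a measure" +
  fixes X :: "nat \<Rightarrow> 'a \<Rightarrow> real" and n :: nat and S f :: "real \<Rightarrow> real"
  assumes n: "1 \<le> n"
    and X_measurable[measurable]: "\<And>i. i < n \<Longrightarrow> X i \<in> borel_measurable M"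
    and survival: "\<And>x. (\<forall>j<n. 0 \<le> x j) \<Longrightarrow>
        prob {\<omega> \<in> space M. \<forall>j<n. x j < X j \<omega>} = S (\<Sum>j<n. x j)"
    and S_0: "S 0 = 1"
    and f_continuous: "continuous_on {0<..} f"
    and f_nonneg: "\<And>s. 0 < s \<Longrightarrow> 0 \<le> f s"
    and S_eq_integral: "\<And>B. 0 \<le> B \<Longrightarrow> ennreal (S B) =
        (\<integral>\<^sup>+ u. ennreal (f (B + u) * u ^ (n - 1) / fact (n - 1)) * indicator {0<..} u \<partial>lborel)"
begin

definition f_pos :: "real \<Rightarrow> ennreal" where
  "f_pos s = ennreal (indicator {0<..} s * f s)"

lemma f_pos_measurable[measurable]: "f_pos \<in> borel_measurable borel"
proof -
  have "(\<lambda>s. indicator {0<..} s *\<^sub>R f s) \<in> borel_measurable borel"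
    by (intro borel_measurable_continuous_on_indicator f_continuous) simp
  then show ?thesis unfolding f_pos_def[abs_def] by simp
qed

lemma AE_pos: "AE \<omega> in M. \<forall>j<n. 0 < X j \<omega>"
proof -
  have "prob {\<omega> \<in> space M. \<forall>j<n. 0 < X j \<omega>} = 1"
    using survival[of "\<lambda>_. 0"] S_0 by simp
  from AE_prob_1[OF this] show ?thesis by eventually_elim auto
qed

definition joint_density :: "(nat \<Rightarrow> real) \<Rightarrow> ennreal" where
  "joint_density z = f_pos (\<Sum>j<n. z j) * indicator {z. \<forall>j\<in>{..<n}. 0 < z j} z"

lemma X_vector_measurable: "(\<lambda>\<omega>. \<lambda>j\<in>{..<n}. X j \<omega>) \<in> measurable M (PiM {..<n} (\<lambda>_. lborel))"
  by (rule measurable_restrict) auto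

lemma upper_orthant_sets: "upper_orthant {..<n} a \<in> sets (PiM {..<n} (\<lambda>_. lborel))"
  using sets_PiM_lborel_eq_sigma_upper_orthants[of "{..<n}"] by auto

lemma emeasure_distr_upper_orthant:
  "emeasure (distr M (PiM {..<n} (\<lambda>_. lborel)) (\<lambda>\<omega>. \<lambda>j\<in>{..<n}. X j \<omega>)) (upper_orthant {..<n} a) =
   ennreal (S (\<Sum>j<n. max (a j) 0))"
proof -
  have "(\<lambda>\<omega>. \<lambda>j\<in>{..<n}. X j \<omega>) -` upper_orthant {..<n} a \<inter> space M =
      {\<omega> \<in> space M. \<forall>j<n. a j < X j \<omega>}"
    by (auto simp: upper_orthant_def)
  then have "emeasure (distr M (PiM {..<n} (\<lambda>_. lborel)) (\<lambda>\<omega>. \<lambda>j\<in>{..<n}. X j \<omega>)) (upper_orthant {..<n} a) =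
      emeasure M {\<omega> \<in> space M. \<forall>j<n. a j < X j \<omega>}"
    by (simp add: emeasure_distr[OF X_vector_measurable upper_orthant_sets])
  also have "\<dots> = emeasure M {\<omega> \<in> space M. \<forall>j<n. max (a j) 0 < X j \<omega>}"
    by (rule emeasure_Collect_eq_AE) (use AE_pos in \<open>auto elim!: eventually_mono\<close>)
  also have "\<dots> = ennreal (S (\<Sum>j<n. max (a j) 0))"
    using survival[of "\<lambda>j. max (a j) 0"] by (simp add: emeasure_eq_measure)
  finally show ?thesis .
qed

lemma emeasure_density_upper_orthant:
  "emeasure (density (PiM {..<n} (\<lambda>_. lborel)) joint_density) (upper_orthant {..<n} a) =
   ennreal (S (\<Sum>j<n. max (a j) 0))"
proof -
  let ?P = "PiM {..<n} (\<lambda>_. lborel :: real measure)" and ?b = "\<lambda>j. max (a j) 0"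
  have "joint_density \<in> borel_measurable ?P" unfolding joint_density_def[abs_def] by measurable
  then have "emeasure (density ?P joint_density) (upper_orthant {..<n} a) =
      (\<integral>\<^sup>+ z. joint_density z * indicator (upper_orthant {..<n} a) z \<partial>?P)"
    by (rule emeasure_density[OF _ upper_orthant_sets])
  also have "\<dots> = (\<integral>\<^sup>+ z. f_pos (\<Sum>j<n. z j) * indicator {z. \<forall>j\<in>{..<n}. ?b j < z j} z \<partial>?P)"
    by (intro nn_integral_cong)
       (auto simp: joint_density_def upper_orthant_def space_PiM PiE_def split: split_indicator)
  also have "\<dots> = (\<integral>\<^sup>+ u. f_pos ((\<Sum>j<n. ?b j) + u) * ennreal (u ^ (n - 1) / fact (n - 1)) *
      indicator {0<..} u \<partial>lborel)"
    using nn_integral_PiM_sum_orthant[of "{..<n}" f_pos ?b] n by (simp add: lessThan_empty_iff)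
  also have "\<dots> = ennreal (S (\<Sum>j<n. ?b j))"
  proof -
    have "ennreal (f (B + u) * u ^ (n - 1) / fact (n - 1)) * indicator {0<..} u =
        f_pos (B + u) * ennreal (u ^ (n - 1) / fact (n - 1)) * indicator {0<..} u" if "0 \<le> B" for B u
      using that f_nonneg[of "B + u"] by (cases "0 < u") (simp_all add: f_pos_def ennreal_mult'[symmetric])
    moreover have "0 \<le> (\<Sum>j<n. ?b j)" by (simp add: sum_nonneg)
    ultimately show ?thesis by (simp add: S_eq_integral)
  qed
  finally show ?thesis .
qed

lemma distr_PiM_eq_density:
  "distr M (PiM {..<n} (\<lambda>_. lborel)) (\<lambda>\<omega>. \<lambda>j\<in>{..<n}. X j \<omega>) =
   density (PiM {..<n} (\<lambda>_. lborel)) joint_density"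
proof (rule measure_eqI_upper_orthants[of "{..<n}"])
  interpret distr: prob_space "distr M (PiM {..<n} (\<lambda>_. lborel)) (\<lambda>\<omega>. \<lambda>j\<in>{..<n}. X j \<omega>)"
    by (rule prob_space_distr[OF X_vector_measurable])
  show "emeasure (distr M (PiM {..<n} (\<lambda>_. lborel)) (\<lambda>\<omega>. \<lambda>j\<in>{..<n}. X j \<omega>)) (upper_orthant {..<n} a) \<noteq> \<infinity>"
    for a by simp
qed (simp_all add: emeasure_distr_upper_orthant emeasure_density_upper_orthant)

lemma distributed_sum:
  "distributed M lborel (\<lambda>\<omega>. \<Sum>i<n. X i \<omega>)
     (\<lambda>s. ennreal (if 0 < s then f s * s ^ (n - 1) / fact (n - 1) else 0))"
proof -
  let ?P = "PiM {..<n} (\<lambda>_. lborel :: real measure)" and ?X = "\<lambda>\<omega>. \<lambda>j\<in>{..<n}. X j \<omega>"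
  have [measurable]: "?X \<in> measurable M ?P"
    by (rule X_vector_measurable)
  have density_eq: "(\<lambda>s. f_pos s * ennreal (s ^ (n - 1) / fact (n - 1)) * indicator {0<..} s) =
      (\<lambda>s. ennreal (if 0 < s then f s * s ^ (n - 1) / fact (n - 1) else 0))"
    by (auto simp: fun_eq_iff f_pos_def ennreal_mult'[symmetric] f_nonneg split: split_indicator)
  have "(\<lambda>s. f_pos s * ennreal (s ^ (n - 1) / fact (n - 1)) * indicator {0<..} s) \<in> borel_measurable borel"
    by measurable
  moreover have "distr M lborel (\<lambda>\<omega>. \<Sum>i<n. X i \<omega>) = distr (distr M ?P ?X) lborel (\<lambda>z. \<Sum>j<n. z j)"
    by (subst distr_distr) (auto intro!: distr_cong simp: comp_def)
  moreover have "\<dots> = density lborel (\<lambda>s. f_pos s * ennreal (s ^ (n - 1) / fact (n - 1)) * indicator {0<..} s)"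
    unfolding distr_PiM_eq_density joint_density_def using distr_sum_density_PiM_orthant[of "{..<n}" f_pos] n
    by (simp add: lessThan_empty_iff)
  ultimately show ?thesis
    unfolding distributed_def density_eq by simp
qed

end

theorem theorem9:
  fixes M :: "'a measure" and X :: "nat \<Rightarrow> 'a \<Rightarrow> real"
    and lam mu :: real and n :: nat
  assumes "prob_space M"
    and "lam > 0" and "mu > 0" and "n \<ge> 1"
    and "\<And>i. i < n \<Longrightarrow> X i \<in> borel_measurable M"
    and "\<And>x :: nat \<Rightarrow> real. (\<forall>j<n. x j \<ge> 0) \<Longrightarrow>
           measure M {\<omega> \<in> space M. \<forall>j<n. X j \<omega> > x j} =
           exp (- (lam / mu) * (sqrt (1 + 2 * mu\<^sup>2 / lam * (\<Sum>j<n. x j)) - 1))"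
  shows "distributed M lborel (\<lambda>\<omega>. \<Sum>i<n. X i \<omega>)
           (\<lambda>x. ennreal (ig_sum_pdf lam mu n x))"
proof -
  define \<beta> c where "\<beta> = lam / mu" and "c = 2 * mu\<^sup>2 / lam"
  have "0 < \<beta>" "0 < c" using assms(2,3) by (simp_all add: \<beta>_def c_def)
  interpret E: completely_monotone_chain "ig_surv_nderiv \<beta> c"
    using completely_monotone_chain_ig_surv_nderiv \<open>0 < c\<close> \<open>0 < \<beta>\<close> .
  interpret Schur_constant_survival M X n "ig_surv \<beta> c" "ig_surv_nderiv \<beta> c n"
  proof (rule Schur_constant_survival.intro[OF assms(1) Schur_constant_survival_axioms.intro])
    show "continuous_on {0<..} (ig_surv_nderiv \<beta> c n)"
      by (intro continuous_at_imp_continuous_on ballI DERIV_isCont[OF E.has_derivative]) simp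
    show "ennreal (ig_surv \<beta> c B) = (\<integral>\<^sup>+ u. ennreal (ig_surv_nderiv \<beta> c n (B + u) *
        u ^ (n - 1) / fact (n - 1)) * indicator {0<..} u \<partial>lborel)" if "0 \<le> B" for B
      using E.nn_integral_Taylor[OF that assms(4)] by (simp add: ig_surv_nderiv_0)
  qed (use assms E.nonneg in \<open>simp_all add: ig_surv_def \<beta>_def c_def\<close>)
  have "(\<lambda>x. ennreal (ig_sum_pdf lam mu n x)) =
      (\<lambda>s. ennreal (if 0 < s then ig_surv_nderiv \<beta> c n s * s ^ (n - 1) / fact (n - 1) else 0))"
    unfolding \<beta>_def c_def using ig_sum_pdf_eq[OF assms(2-4)] by simp
  with distributed_sum show ?thesis by simp
qed

end
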